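(* Let $\beta>0$ and $M\ge1$. Every solution $\mathbf{p}\in\mathbb{R}^M$ of the system $$\mathbf{p}=\big\langle \mathbf{s}\,\tanh(\beta\,\mathbf{s}\cdot\mathbf{p})\big\rangle_{\mathbf{s}}$$ has all components equal: $p^\mu=p^\nu$ for all $\mu,\nu\in\{1,\dots,M\}$.
   Context: $m_0(\beta):=\lim_{h\to0^+}m_0(\beta,h)$, where $m_0(\beta,h)$ is the unique solution of $m=\tanh(\beta m+h)$ for $h>0$; equivalently $m_0(\beta)$ is the largest nonnegative solution of $m=\tanh(\beta m)$ (so $m_0(\beta)=0$ for $\beta\le1$ and $m_0(\beta)>0$ for $\beta>1$). $\langle\cdot\rangle_{\mathbf{s}}$ denotes expectation over $\mathbf{s}\in\{-1,1\}^M$ with i.i.d. entries of mean $m_0(\beta)$, i.e. weight $e^{\beta m_0\sum_\mu s_\mu}/(2\cosh(\beta m_0))^M$. *)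

theory Defs
  imports Complex_Main "HOL-Library.FuncSet"
begin

definition m0 :: "real \<Rightarrow> real" where
  "m0 \<beta> = (GREATEST m. 0 \<le> m \<and> m = tanh (\<beta> * m))"

text \<open>Spin configurations s in {-1,1}^M, indexed by 0..M-1 (extensional).\<close>
definition spins :: "nat \<Rightarrow> (nat \<Rightarrow> real) set" where
  "spins M = PiE {..<M} (\<lambda>_. {-1, 1})"

definition dotM :: "nat \<Rightarrow> (nat \<Rightarrow> real) \<Rightarrow> (nat \<Rightarrow> real) \<Rightarrow> real" where
  "dotM M s p = (\<Sum>\<mu><M. s \<mu> * p \<mu>)"

text \<open>Probability weight of s: i.i.d. entries with mean m0(beta).\<close>
definition spin_weight :: "real \<Rightarrow> nat \<Rightarrow> (nat \<Rightarrow> real) \<Rightarrow> real" where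
  "spin_weight \<beta> M s =
     exp (\<beta> * m0 \<beta> * (\<Sum>\<mu><M. s \<mu>)) / (2 * cosh (\<beta> * m0 \<beta>)) ^ M"

definition spin_avg :: "real \<Rightarrow> nat \<Rightarrow> ((nat \<Rightarrow> real) \<Rightarrow> real) \<Rightarrow> real" where
  "spin_avg \<beta> M f = (\<Sum>s\<in>spins M. spin_weight \<beta> M s * f s)"

end

theory Submission
  imports Defs "HOL-Analysis.Elementary_Metric_Spaces"
begin

text \<open>
  Fix sites \<open>\<mu> \<noteq> \<nu>\<close> and put \<open>d = p\<^sup>\<mu> - p\<^sup>\<nu>\<close>. Exchanging the spins at \<open>\<mu>\<close> and \<open>\<nu>\<close> is a
  weight-preserving involution of the configurations that changes \<open>s \<cdot> p\<close> by \<open>(s\<^sub>\<mu> - s\<^sub>\<nu>) d\<close>;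
  symmetrising the fixed-point equations with it gives
  \<open>d = \<langle>(s\<^sub>\<mu> - s\<^sub>\<nu>) (tanh (\<beta> s\<cdot>p) - tanh (\<beta> s'\<cdot>p))\<rangle> / 2\<close>,
  with \<open>s'\<close> the exchanged configuration.
  As \<open>tanh\<close> is a strict contraction, \<open>|d| < \<beta> |d| \<langle>(s\<^sub>\<mu> - s\<^sub>\<nu>)\<^sup>2\<rangle> / 2 = \<beta> (1 - m\<^sub>0\<^sup>2) |d|\<close>
  unless \<open>d = 0\<close>, where the second moment is computed from the independence of the sites.
  Finally \<open>\<beta> (1 - m\<^sub>0\<^sup>2) \<le> 1\<close> because \<open>m\<^sub>0\<close> is the largest fixed point of \<open>m \<mapsto> tanh (\<beta> m)\<close>.
\<close>

lemma m0_greatest_fixed_point: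
  fixes \<beta> :: real
  shows "0 \<le> m0 \<beta>" and "tanh (\<beta> * m0 \<beta>) = m0 \<beta>"
    and "\<And>m. 0 \<le> m \<Longrightarrow> tanh (\<beta> * m) = m \<Longrightarrow> m \<le> m0 \<beta>"
proof -
  define S where "S = {m::real. 0 \<le> m \<and> m = tanh (\<beta> * m)}"
  have "closed S"
    unfolding S_def Collect_conj_eq
    by (intro closed_Int closed_Collect_le closed_Collect_eq continuous_intros) auto
  moreover have "S \<noteq> {}" unfolding S_def by auto
  moreover have "bdd_above S"
  proof (rule bdd_aboveI)
    fix m assume "m \<in> S"
    then have "m = tanh (\<beta> * m)" unfolding S_def by blast
    then show "m \<le> 1" using tanh_real_lt_1[of "\<beta> * m"] by linarith
  qed
  ultimately have Sup_in: "Sup S \<in> S" and Sup_ge: "\<And>m. m \<in> S \<Longrightarrow> m \<le> Sup S"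
    using closed_contains_Sup cSup_upper by blast+
  then have "m0 \<beta> = Sup S"
    unfolding m0_def S_def by (intro Greatest_equality) blast+
  with Sup_in Sup_ge show "0 \<le> m0 \<beta>" "tanh (\<beta> * m0 \<beta>) = m0 \<beta>"
    "\<And>m. 0 \<le> m \<Longrightarrow> tanh (\<beta> * m) = m \<Longrightarrow> m \<le> m0 \<beta>"
    unfolding S_def by force+
qed

text \<open>
  Otherwise \<open>g m = tanh (\<beta> m) - m\<close> would have positive slope at its zero \<open>m\<^sub>0\<close>; being negative
  at \<open>1\<close>, it would then vanish again to the right of \<open>m\<^sub>0\<close>.
\<close>
lemma m0_stable: "\<beta> * (1 - m0 \<beta> ^ 2) \<le> 1"
proof (rule ccontr)
  define g where "g x = tanh (\<beta> * x) - x" for x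
  let ?m = "m0 \<beta>"
  note fixed = m0_greatest_fixed_point[where \<beta> = \<beta>]
  assume "\<not> ?thesis"
  then have "\<beta> * (1 - tanh (\<beta> * ?m) ^ 2) - 1 > 0"
    by (simp add: fixed(2))
  moreover have "DERIV g ?m :> \<beta> * (1 - tanh (\<beta> * ?m) ^ 2) - 1"
    unfolding g_def by (auto intro!: derivative_eq_intros)
  ultimately obtain d where "d > 0" and d: "\<And>h. 0 < h \<Longrightarrow> h < d \<Longrightarrow> g ?m < g (?m + h)"
    using DERIV_pos_inc_right by blast
  define x0 where "x0 = ?m + d / 2"
  have "g x0 > 0" using d[of "d / 2"] \<open>d > 0\<close> unfolding x0_def g_def by (simp add: fixed(2))
  moreover have "g 1 < 0" unfolding g_def using tanh_real_lt_1 by simp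
  moreover have "x0 \<le> 1"
    using \<open>g x0 > 0\<close> tanh_real_lt_1[of "\<beta> * x0"] unfolding g_def by linarith
  moreover have "continuous_on {x0..1} g" unfolding g_def by (auto intro!: continuous_intros)
  ultimately obtain x where "x0 \<le> x" "g x = 0"
    using IVT2'[of g 1 0 x0] by force
  moreover have "?m < x0" using \<open>d > 0\<close> unfolding x0_def by simp
  ultimately have "?m < x" "tanh (\<beta> * x) = x" unfolding g_def by simp_all
  then show False using fixed(1) fixed(3)[of x] by linarith
qed

lemma x_minus_tanh_less_of_nonneg:
  fixes a b :: real assumes "0 \<le> a" "a < b"
  shows "a - tanh a < b - tanh b"
proof (rule DERIV_pos_imp_increasing_open[OF \<open>a < b\<close>])
  fix x assume "a < x" "x < b"
  then show "\<exists>y. ((\<lambda>x. x - tanh x) has_real_derivative y) (at x) \<and> 0 < y"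
    using assms by (intro exI[of _ "tanh x ^ 2"]) (auto intro!: derivative_eq_intros)
qed (auto intro!: continuous_intros)

lemma strict_mono_x_minus_tanh: "strict_mono (\<lambda>x::real. x - tanh x)"
proof
  fix a b :: real assume "a < b"
  consider "0 \<le> a" | "b \<le> 0" | "a < 0" "0 < b" by linarith
  then show "a - tanh a < b - tanh b"
  proof cases
    case 2
    then show ?thesis using x_minus_tanh_less_of_nonneg[of "-b" "-a"] \<open>a < b\<close> by simp
  next
    case 3
    then show ?thesis using x_minus_tanh_less_of_nonneg[of 0 "-a"] x_minus_tanh_less_of_nonneg[of 0 b] by simp
  qed (use x_minus_tanh_less_of_nonneg \<open>a < b\<close> in blast)
qed

lemma tanh_real_abs_diff_less:
  fixes x y :: real assumes "x \<noteq> y"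
  shows "\<bar>tanh x - tanh y\<bar> < \<bar>x - y\<bar>"
  using assms strict_monoD[OF strict_mono_x_minus_tanh, of x y]
    strict_monoD[OF strict_mono_x_minus_tanh, of y x] tanh_real_less_iff[of x y] tanh_real_less_iff[of y x]
  by (cases x y rule: linorder_cases) auto

definition site_weight :: "real \<Rightarrow> real \<Rightarrow> real" where
  "site_weight \<beta> x = exp (\<beta> * m0 \<beta> * x) / (2 * cosh (\<beta> * m0 \<beta>))"

lemma two_cosh_real: "2 * cosh x = exp x + exp (- x :: real)"
  by (simp add: cosh_field_def)

lemma site_weight_sum: "(\<Sum>x\<in>{-1, 1}. site_weight \<beta> x) = 1"
  using add_pos_pos[OF exp_gt_zero exp_gt_zero, of "\<beta> * m0 \<beta>" "- (\<beta> * m0 \<beta>)"]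
  by (simp add: site_weight_def two_cosh_real add_divide_distrib[symmetric])

lemma site_weight_mean: "(\<Sum>x\<in>{-1, 1}. site_weight \<beta> x * x) = m0 \<beta>"
proof -
  have "(\<Sum>x\<in>{-1, 1}. site_weight \<beta> x * x) = tanh (\<beta> * m0 \<beta>)"
    by (simp add: site_weight_def tanh_altdef two_cosh_real diff_divide_distrib)
  then show ?thesis by (simp add: m0_greatest_fixed_point(2))
qed

lemma spin_weight_prod: "spin_weight \<beta> M s = (\<Prod>k<M. site_weight \<beta> (s k))"
  unfolding spin_weight_def site_weight_def by (simp add: sum_distrib_left exp_sum prod_dividef)

lemma spin_avg_prod:
  "spin_avg \<beta> M (\<lambda>s. \<Prod>k<M. h k (s k)) = (\<Prod>k<M. \<Sum>x\<in>{-1, 1}. site_weight \<beta> x * h k x)"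
  unfolding spin_avg_def spins_def spin_weight_prod prod.distrib[symmetric]
  by (rule prod_sum_PiE[symmetric]) auto

lemma spin_avg_const: "spin_avg \<beta> M (\<lambda>_. a) = a"
proof -
  have "spin_avg \<beta> M (\<lambda>_. 1) = 1"
    using spin_avg_prod[of \<beta> M "\<lambda>_ _. 1"] by (simp add: site_weight_sum)
  then show ?thesis unfolding spin_avg_def by (simp add: sum_distrib_right[symmetric])
qed

lemma spin_avg_pair_product:
  assumes "\<mu> < M" "\<nu> < M" "\<mu> \<noteq> \<nu>"
  shows "spin_avg \<beta> M (\<lambda>s. s \<mu> * s \<nu>) = m0 \<beta> ^ 2"
proof -
  define h where "h k x = (if k \<in> {\<mu>, \<nu>} then x else 1)" for k and x :: real
  have pair: "{..<M} \<inter> {k. k = \<mu> \<or> k = \<nu>} = {\<mu>, \<nu>}" using assms by auto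
  have "(\<Prod>k<M. h k (s k)) = s \<mu> * s \<nu>" for s
    using assms by (simp add: h_def prod.If_cases pair)
  moreover have "(\<Sum>x\<in>{-1, 1}. site_weight \<beta> x * h k x) = (if k \<in> {\<mu>, \<nu>} then m0 \<beta> else 1)" for k
    using site_weight_sum[of \<beta>] site_weight_mean[of \<beta>] by (simp add: h_def)
  ultimately show ?thesis
    using spin_avg_prod[of \<beta> M h] assms by (simp add: prod.If_cases pair power2_eq_square)
qed

lemma spin_avg_sq_diff:
  assumes "\<mu> < M" "\<nu> < M" "\<mu> \<noteq> \<nu>"
  shows "spin_avg \<beta> M (\<lambda>s. (s \<mu> - s \<nu>) ^ 2) = 2 * (1 - m0 \<beta> ^ 2)"
proof -
  have sq: "(s \<mu> - s \<nu>) ^ 2 = 2 - 2 * (s \<mu> * s \<nu>)" if "s \<in> spins M" for s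
  proof -
    have "s \<mu> \<in> {-1, 1}" "s \<nu> \<in> {-1, 1}" using that assms by (auto simp: spins_def PiE_iff)
    then show ?thesis by (auto simp: power2_eq_square algebra_simps)
  qed
  have "spin_avg \<beta> M (\<lambda>s. (s \<mu> - s \<nu>) ^ 2) = spin_avg \<beta> M (\<lambda>s. 2 - 2 * (s \<mu> * s \<nu>))"
    unfolding spin_avg_def by (rule sum.cong) (simp_all only: sq)
  also have "\<dots> = 2 * spin_avg \<beta> M (\<lambda>_. 1) - 2 * spin_avg \<beta> M (\<lambda>s. s \<mu> * s \<nu>)"
    unfolding spin_avg_def by (simp add: sum_subtractf sum_distrib_left algebra_simps)
  finally show ?thesis using assms by (simp add: spin_avg_const spin_avg_pair_product algebra_simps)
qed

definition swap_sites :: "nat \<Rightarrow> nat \<Rightarrow> (nat \<Rightarrow> real) \<Rightarrow> nat \<Rightarrow> real" where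
  "swap_sites \<mu> \<nu> s = s(\<mu> := s \<nu>, \<nu> := s \<mu>)"

lemma swap_sites_apply [simp]:
  "swap_sites \<mu> \<nu> s \<mu> = s \<nu>" "swap_sites \<mu> \<nu> s \<nu> = s \<mu>"
  by (auto simp: swap_sites_def)

lemma swap_sites_swap_sites [simp]: "swap_sites \<mu> \<nu> (swap_sites \<mu> \<nu> s) = s"
  by (auto simp: swap_sites_def fun_eq_iff)

lemma swap_sites_in_spins:
  "\<mu> < M \<Longrightarrow> \<nu> < M \<Longrightarrow> s \<in> spins M \<Longrightarrow> swap_sites \<mu> \<nu> s \<in> spins M"
  by (auto simp: spins_def swap_sites_def PiE_iff extensional_def)

lemma bij_betw_swap_sites:
  "\<mu> < M \<Longrightarrow> \<nu> < M \<Longrightarrow> bij_betw (swap_sites \<mu> \<nu>) (spins M) (spins M)"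
  by (rule bij_betw_byWitness[where f' = "swap_sites \<mu> \<nu>"]) (auto simp: swap_sites_in_spins)

lemma dotM_swap_sites:
  assumes "\<mu> < M" "\<nu> < M"
  shows "dotM M (swap_sites \<mu> \<nu> s) p = dotM M s p - (s \<mu> - s \<nu>) * (p \<mu> - p \<nu>)"
proof (cases "\<mu> = \<nu>")
  case True
  then show ?thesis by (simp add: swap_sites_def)
next
  case False
  have "swap_sites \<mu> \<nu> s k * p k - s k * p k =
      (if k = \<mu> then (s \<nu> - s \<mu>) * p \<mu> else 0) + (if k = \<nu> then (s \<mu> - s \<nu>) * p \<nu> else 0)" for k
    using False by (auto simp: swap_sites_def algebra_simps)
  then have "dotM M (swap_sites \<mu> \<nu> s) p - dotM M s p = (s \<nu> - s \<mu>) * p \<mu> + (s \<mu> - s \<nu>) * p \<nu>"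
    using assms by (simp add: dotM_def sum_subtractf[symmetric] sum.distrib)
  then show ?thesis by (simp add: algebra_simps)
qed

lemma spin_weight_swap_sites:
  "\<mu> < M \<Longrightarrow> \<nu> < M \<Longrightarrow> spin_weight \<beta> M (swap_sites \<mu> \<nu> s) = spin_weight \<beta> M s"
  using dotM_swap_sites[of \<mu> M \<nu> s "\<lambda>_. 1"] by (simp add: spin_weight_def dotM_def)

lemma spin_avg_swap_sites:
  assumes "\<mu> < M" "\<nu> < M"
  shows "spin_avg \<beta> M (\<lambda>s. f (swap_sites \<mu> \<nu> s)) = spin_avg \<beta> M f"
proof -
  have "spin_avg \<beta> M f =
      (\<Sum>s\<in>spins M. spin_weight \<beta> M (swap_sites \<mu> \<nu> s) * f (swap_sites \<mu> \<nu> s))"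
    unfolding spin_avg_def by (rule sum.reindex_bij_betw[OF bij_betw_swap_sites[OF assms], symmetric])
  then show ?thesis unfolding spin_avg_def by (simp add: spin_weight_swap_sites assms)
qed

lemma spin_avg_antisymmetrize:
  assumes "\<mu> < M" "\<nu> < M"
  shows "spin_avg \<beta> M (\<lambda>s. (s \<mu> - s \<nu>) * f s) =
    spin_avg \<beta> M (\<lambda>s. (s \<mu> - s \<nu>) * (f s - f (swap_sites \<mu> \<nu> s))) / 2"
proof -
  have "spin_avg \<beta> M (\<lambda>s. (s \<mu> - s \<nu>) * f s) = spin_avg \<beta> M (\<lambda>s. (s \<nu> - s \<mu>) * f (swap_sites \<mu> \<nu> s))"
    using spin_avg_swap_sites[OF assms, of \<beta> "\<lambda>s. (s \<mu> - s \<nu>) * f s"] by simp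
  then show ?thesis
    unfolding spin_avg_def by (simp add: algebra_simps sum_subtractf sum.distrib)
qed

lemma spin_weight_pos: "spin_weight \<beta> M s > 0"
  by (simp add: spin_weight_def)

lemma spins_with_distinct_sites:
  assumes "\<mu> < M" "\<nu> < M" "\<mu> \<noteq> \<nu>"
  obtains s where "s \<in> spins M" "s \<mu> \<noteq> s \<nu>"
proof
  show "(\<lambda>k\<in>{..<M}. if k = \<mu> then 1 else -1) \<in> spins M" by (auto simp: spins_def)
qed (use assms in auto)

lemma spin_avg_scale: "spin_avg \<beta> M (\<lambda>s. c * f s) = c * spin_avg \<beta> M f"
  unfolding spin_avg_def by (simp add: sum_distrib_left mult_ac)

lemma abs_spin_avg_le: "\<bar>spin_avg \<beta> M f\<bar> \<le> spin_avg \<beta> M (\<lambda>s. \<bar>f s\<bar>)"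
  unfolding spin_avg_def
  by (rule order_trans[OF sum_abs]) (simp add: abs_mult spin_weight_pos less_imp_le)

lemma spin_avg_strict_mono:
  assumes "\<And>s. s \<in> spins M \<Longrightarrow> f s \<le> g s" and "s0 \<in> spins M" "f s0 < g s0"
  shows "spin_avg \<beta> M f < spin_avg \<beta> M g"
  unfolding spin_avg_def
proof (rule sum_strict_mono_ex1)
  show "finite (spins M)" by (simp add: spins_def finite_PiE)
  show "\<forall>s\<in>spins M. spin_weight \<beta> M s * f s \<le> spin_weight \<beta> M s * g s"
    using assms(1) spin_weight_pos by (simp add: less_imp_le mult_left_mono)
  show "\<exists>s\<in>spins M. spin_weight \<beta> M s * f s < spin_weight \<beta> M s * g s"
    using assms(2,3) spin_weight_pos by (blast intro: mult_strict_left_mono)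
qed

lemma fixed_point_site_difference:
  assumes "\<mu> < M" "\<nu> < M"
    and fp: "\<forall>\<nu><M. p \<nu> = spin_avg \<beta> M (\<lambda>s. s \<nu> * tanh (\<beta> * dotM M s p))"
  shows "p \<mu> - p \<nu> = spin_avg \<beta> M (\<lambda>s. (s \<mu> - s \<nu>) *
    (tanh (\<beta> * dotM M s p) - tanh (\<beta> * dotM M (swap_sites \<mu> \<nu> s) p))) / 2"
proof -
  have "p \<mu> - p \<nu> = spin_avg \<beta> M (\<lambda>s. s \<mu> * tanh (\<beta> * dotM M s p)) -
      spin_avg \<beta> M (\<lambda>s. s \<nu> * tanh (\<beta> * dotM M s p))"
    using fp[rule_format, OF \<open>\<mu> < M\<close>] fp[rule_format, OF \<open>\<nu> < M\<close>] by linarith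
  also have "\<dots> = spin_avg \<beta> M (\<lambda>s. (s \<mu> - s \<nu>) * tanh (\<beta> * dotM M s p))"
    unfolding spin_avg_def by (simp add: sum_subtractf[symmetric] algebra_simps)
  finally show ?thesis
    by (simp only: spin_avg_antisymmetrize[OF assms(1,2), of \<beta> "\<lambda>s. tanh (\<beta> * dotM M s p)"])
qed

lemma abs_tanh_dotM_swap_sites_diff_less:
  fixes \<beta> :: real
  assumes "\<beta> > 0" "\<mu> < M" "\<nu> < M" "s \<mu> \<noteq> s \<nu>" "p \<mu> \<noteq> p \<nu>"
  shows "\<bar>(s \<mu> - s \<nu>) * (tanh (\<beta> * dotM M s p) - tanh (\<beta> * dotM M (swap_sites \<mu> \<nu> s) p))\<bar>
    < \<beta> * \<bar>p \<mu> - p \<nu>\<bar> * (s \<mu> - s \<nu>) ^ 2"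
proof -
  define x y where "x = \<beta> * dotM M s p" and "y = \<beta> * dotM M (swap_sites \<mu> \<nu> s) p"
  have xy: "x - y = \<beta> * (s \<mu> - s \<nu>) * (p \<mu> - p \<nu>)"
    using assms(2,3) by (simp add: x_def y_def dotM_swap_sites algebra_simps)
  then have "x \<noteq> y" using assms(1,4,5) by auto
  then have "\<bar>tanh x - tanh y\<bar> < \<bar>\<beta> * (s \<mu> - s \<nu>) * (p \<mu> - p \<nu>)\<bar>"
    using tanh_real_abs_diff_less[of x y] by (simp add: xy)
  then have "\<bar>s \<mu> - s \<nu>\<bar> * \<bar>tanh x - tanh y\<bar> <
      \<bar>s \<mu> - s \<nu>\<bar> * \<bar>\<beta> * (s \<mu> - s \<nu>) * (p \<mu> - p \<nu>)\<bar>"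
    using assms(4) by (intro mult_strict_left_mono) simp_all
  also have "\<dots> = \<beta> * \<bar>p \<mu> - p \<nu>\<bar> * (s \<mu> - s \<nu>) ^ 2"
    using assms(1) by (simp add: abs_mult power2_eq_square)
  finally show ?thesis unfolding x_def y_def abs_mult .
qed

lemma mean_field_solution_site_eq:
  fixes \<beta> :: real and p :: "nat \<Rightarrow> real"
  assumes "\<beta> > 0" "\<mu> < M" "\<nu> < M"
    and fp: "\<forall>\<nu><M. p \<nu> = spin_avg \<beta> M (\<lambda>s. s \<nu> * tanh (\<beta> * dotM M s p))"
  shows "p \<mu> = p \<nu>"
proof (rule ccontr)
  assume "p \<mu> \<noteq> p \<nu>"
  then have "\<mu> \<noteq> \<nu>" by blast
  define d where "d = p \<mu> - p \<nu>"
  define \<Delta> where "\<Delta> s = (s \<mu> - s \<nu>) *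
    (tanh (\<beta> * dotM M s p) - tanh (\<beta> * dotM M (swap_sites \<mu> \<nu> s) p))" for s
  define bound where "bound s = \<beta> * \<bar>d\<bar> * (s \<mu> - s \<nu>) ^ 2" for s :: "nat \<Rightarrow> real"
  have \<Delta>_less: "\<bar>\<Delta> s\<bar> < bound s" if "s \<mu> \<noteq> s \<nu>" for s
    using abs_tanh_dotM_swap_sites_diff_less[OF assms(1-3) that \<open>p \<mu> \<noteq> p \<nu>\<close>]
    unfolding \<Delta>_def bound_def d_def .
  have \<Delta>_le: "\<bar>\<Delta> s\<bar> \<le> bound s" for s
    using \<Delta>_less[of s] by (cases "s \<mu> = s \<nu>") (simp_all add: \<Delta>_def bound_def)
  obtain s0 where "s0 \<in> spins M" "s0 \<mu> \<noteq> s0 \<nu>"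
    using spins_with_distinct_sites assms(2,3) \<open>\<mu> \<noteq> \<nu>\<close> by blast
  have "d = spin_avg \<beta> M \<Delta> / 2"
    unfolding d_def \<Delta>_def by (rule fixed_point_site_difference[OF assms(2-4)])
  then have "\<bar>d\<bar> \<le> spin_avg \<beta> M (\<lambda>s. \<bar>\<Delta> s\<bar>) / 2"
    using abs_spin_avg_le[of \<beta> M \<Delta>] by simp
  also have "\<dots> < spin_avg \<beta> M bound / 2"
    using spin_avg_strict_mono[of M "\<lambda>s. \<bar>\<Delta> s\<bar>" bound, OF \<Delta>_le \<open>s0 \<in> spins M\<close>]
      \<Delta>_less[OF \<open>s0 \<mu> \<noteq> s0 \<nu>\<close>] by simp
  also have "\<dots> = \<bar>d\<bar> * (\<beta> * (1 - m0 \<beta> ^ 2))"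
    unfolding bound_def by (simp add: spin_avg_scale spin_avg_sq_diff[OF assms(2,3) \<open>\<mu> \<noteq> \<nu>\<close>])
  also have "\<dots> \<le> \<bar>d\<bar>"
    using mult_left_mono[OF m0_stable[of \<beta>] abs_ge_zero[of d]] by simp
  finally show False by simp
qed

theorem mainTheorem3:
  fixes \<beta> :: real and M :: nat and p :: "nat \<Rightarrow> real"
  assumes "\<beta> > 0" and "M \<ge> 1"
    and "\<forall>\<nu><M. p \<nu> = spin_avg \<beta> M (\<lambda>s. s \<nu> * tanh (\<beta> * dotM M s p))"
  shows "\<forall>\<mu><M. \<forall>\<nu><M. p \<mu> = p \<nu>"
  using mean_field_solution_site_eq[OF assms(1) _ _ assms(3)] by blast

end
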